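(* Let $\Omega\subset\mathbb{R}^2$ be the unit disc, with polar coordinates $(r,\phi)$. For $r_1\in(0,1)$ and $\sigma_1>0$ let $R_{\sigma_1,r_1}:H^{-1/2}(\partial\Omega)\to H^{1/2}(\partial\Omega)$ be the Neumann-to-Dirichlet map of the core-shell problem and let $R:H^{-1/2}(\partial\Omega)\to H^{1/2}(\partial\Omega)$ be the Neumann-to-Dirichlet map of the homogeneous disc problem (both defined in the context). Then: (1) for any fixed $r_1\in(0,1)$, $\|R_{\sigma_1,r_1}-R\|\to 0$ as $\sigma_1\to 1$; (2) for any fixed $\sigma_1>0$, $\|R_{\sigma_1,r_1}-R\|\to 0$ as $r_1\to 0$. Here $\|\cdot\|$ denotes the operator norm from $H^{-1/2}(\partial\Omega)$ to $H^{1/2}(\partial\Omega)$.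
   Context: $I_n,K_n$ denote the modified Bessel functions of the first and second kind of order $n$. For $g\in H^{-1/2}(\partial\Omega)$ write $g_n=(g,e^{in\phi})$ for its Fourier coefficients. Core-shell problem: given $r_1\in(0,1)$, $\sigma_1>0$, $\psi$ solves $\frac{1}{r}\partial_r(r\partial_r\psi)+\frac{1}{r^2}\partial_\phi^2\psi-\sigma_1^{-1}\psi=0$ for $0<r<r_1$; $\frac{1}{r}\partial_r(r\partial_r\psi)+\frac{1}{r^2}\partial_\phi^2\psi-\psi=0$ for $r_1<r<1$; $\psi|_{r=r_1}^+=\psi|_{r=r_1}^-$, $\partial_r\psi|_{r=r_1}^+=\sigma_1\partial_r\psi|_{r=r_1}^-$ (where $+$/$-$ denote limits from outside/inside the circle $r=r_1$); $\partial_r\psi|_{r=1}=g$; $\psi$ bounded at $r=0$. Then $R_{\sigma_1,r_1}(g)=\psi|_{r=1}$. Explicitly, $R_{\sigma_1,r_1}(g)=\sum_{n\in\mathbb{Z}}\frac{\rho_n K_n(1)-I_n(1)}{\rho_n K_n'(1)-I_n'(1)}g_ne^{in\phi}$, with $\rho_n=\frac{\sigma_1I_n'(r_1/\sqrt{\sigma_1})I_n(r_1)-I_n(r_1/\sqrt{\sigma_1})I_n'(r_1)}{\sigma_1I_n'(r_1/\sqrt{\sigma_1})K_n(r_1)-I_n(r_1/\sqrt{\sigma_1})K_n'(r_1)}$. Homogeneous problem: $\Psi$ solves $\frac{1}{r}\partial_r(r\partial_r\Psi)+\frac{1}{r^2}\partial_\phi^2\Psi-\Psi=0$ for $0<r<1$,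 $\partial_r\Psi|_{r=1}=g$, $\Psi$ bounded at $r=0$; $R(g)=\Psi|_{r=1}=\sum_{n\in\mathbb{Z}}\frac{I_n(1)}{I_n'(1)}g_ne^{in\phi}$. *)

theory Defs
  imports "HOL-Analysis.Analysis"
begin

definition bessel_I :: "int \<Rightarrow> real \<Rightarrow> real" where
  "bessel_I n x = (\<Sum>k. (x / 2) ^ (2 * k + nat \<bar>n\<bar>) / (fact k * fact (k + nat \<bar>n\<bar>)))"

text \<open>K_n via the standard integral representation, valid for x > 0.\<close>
definition bessel_K :: "int \<Rightarrow> real \<Rightarrow> real" where
  "bessel_K n x = integral {0..} (\<lambda>t. exp (- x * cosh t) * cosh (real_of_int n * t))"

definition bessel_I' :: "int \<Rightarrow> real \<Rightarrow> real" where
  "bessel_I' n x = deriv (bessel_I n) x"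

definition bessel_K' :: "int \<Rightarrow> real \<Rightarrow> real" where
  "bessel_K' n x = deriv (bessel_K n) x"

text \<open>Boundary data are represented by their Fourier coefficients g_n = (g, exp(i n phi)), n integer.\<close>

definition rho :: "real \<Rightarrow> real \<Rightarrow> int \<Rightarrow> real" where
  "rho \<sigma>1 r1 n =
     (\<sigma>1 * bessel_I' n (r1 / sqrt \<sigma>1) * bessel_I n r1 - bessel_I n (r1 / sqrt \<sigma>1) * bessel_I' n r1) /
     (\<sigma>1 * bessel_I' n (r1 / sqrt \<sigma>1) * bessel_K n r1 - bessel_I n (r1 / sqrt \<sigma>1) * bessel_K' n r1)"

definition NtD_core :: "real \<Rightarrow> real \<Rightarrow> (int \<Rightarrow> complex) \<Rightarrow> (int \<Rightarrow> complex)" where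
  "NtD_core \<sigma>1 r1 g = (\<lambda>n. complex_of_real
      ((rho \<sigma>1 r1 n * bessel_K n 1 - bessel_I n 1) / (rho \<sigma>1 r1 n * bessel_K' n 1 - bessel_I' n 1)) * g n)"

definition NtD_hom :: "(int \<Rightarrow> complex) \<Rightarrow> (int \<Rightarrow> complex)" where
  "NtD_hom g = (\<lambda>n. complex_of_real (bessel_I n 1 / bessel_I' n 1) * g n)"

definition in_Hs :: "real \<Rightarrow> (int \<Rightarrow> complex) \<Rightarrow> bool" where
  "in_Hs s g \<longleftrightarrow> (\<lambda>n. (1 + (real_of_int n)\<^sup>2) powr s * (cmod (g n))\<^sup>2) summable_on UNIV"

definition Hs_norm :: "real \<Rightarrow> (int \<Rightarrow> complex) \<Rightarrow> real" where
  "Hs_norm s g = sqrt (\<Sum>\<^sub>\<infinity>n\<in>UNIV. (1 + (real_of_int n)\<^sup>2) powr s * (cmod (g n))\<^sup>2)"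

definition opnorm_Hm_H :: "((int \<Rightarrow> complex) \<Rightarrow> (int \<Rightarrow> complex)) \<Rightarrow> real" where
  "opnorm_Hm_H T = Sup {Hs_norm (1/2) (T g) / Hs_norm (-1/2) g | g. in_Hs (-1/2) g \<and> (\<exists>n. g n \<noteq> 0)}"

end

theory Submission
  imports Defs
begin

text \<open>Both Neumann-to-Dirichlet maps are Fourier multipliers, so the operator norm of their
  difference is controlled by sup_n sqrt (1 + n^2) |m_n|, where m_n is the difference of the two
  symbols. The symbol m_n depends on sigma1 and r1 only through rho_n and vanishes at rho_n = 0, so
  it suffices that every rho_n tends to 0 and that the tail n >= N is uniformly small.

  The power series of I_k gives k/x I_k <= I_k' <= (k/x + x/2) I_k and I_k(r) <= r^k I_k(1); the
  integral representation of K_k gives that K_k and -K_k' are positive and decreasing and that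
  -K_k'(1) <= (k + 1) K_k(1). Together these yield |rho_k| <= C(sigma1) r1^k I_k(1) / K_k(1) for
  k >= 1 and then sqrt (1 + k^2) |m_k| <= 8 C(sigma1) (k + 1) r1^k whenever the right-hand side is
  at most 4. This is uniformly small for large k when sigma1 is near 1, and for all k >= 1 when r1
  is small. Each single rho_k tends to 0 by continuity as sigma1 -> 1, and by the same bound (a
  separate one for k = 0) as r1 -> 0.\<close>

section \<open>Fourier multipliers from H^(-1/2) to H^(1/2)\<close>

lemma Hs_norm_nonneg: "0 \<le> Hs_norm s g"
  unfolding Hs_norm_def by (simp add: infsum_nonneg)

lemma Hs_norm_multiplier_le:
  fixes \<mu> :: "int \<Rightarrow> real"
  assumes \<mu>: "\<And>n. sqrt (1 + (real_of_int n)\<^sup>2) * \<bar>\<mu> n\<bar> \<le> \<epsilon>" and g: "in_Hs (-1/2) g"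
  shows "Hs_norm (1/2) (\<lambda>n. complex_of_real (\<mu> n) * g n) \<le> \<epsilon> * Hs_norm (-1/2) g"
proof -
  have \<epsilon>: "0 \<le> \<epsilon>"
    using \<mu>[of 0] by simp
  define a where "a n = (1 + (real_of_int n)\<^sup>2) powr (-1/2) * (cmod (g n))\<^sup>2" for n
  define b where "b n = (1 + (real_of_int n)\<^sup>2) powr (1/2) * (cmod (complex_of_real (\<mu> n) * g n))\<^sup>2" for n
  have b_le: "b n \<le> \<epsilon>\<^sup>2 * a n" for n
  proof -
    define w where "w = 1 + (real_of_int n)\<^sup>2"
    have w: "0 < w"
      unfolding w_def by (simp add: add_pos_nonneg)
    have "(sqrt w * \<bar>\<mu> n\<bar>)\<^sup>2 \<le> \<epsilon>\<^sup>2"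
      using \<mu>[of n] w unfolding w_def by (intro power_mono) auto
    then have "w * (\<mu> n)\<^sup>2 \<le> \<epsilon>\<^sup>2"
      using w by (simp add: power_mult_distrib)
    then have "(w * (\<mu> n)\<^sup>2) * (w powr (-1/2) * (cmod (g n))\<^sup>2) \<le> \<epsilon>\<^sup>2 * (w powr (-1/2) * (cmod (g n))\<^sup>2)"
      by (rule mult_right_mono) simp
    moreover have "w powr (1/2) = w * w powr (-1/2)"
      using powr_add[of w 1 "-1/2"] w by simp
    ultimately show ?thesis
      unfolding a_def b_def w_def[symmetric] by (simp add: norm_mult power_mult_distrib mult_ac)
  qed
  have a_summable: "a summable_on UNIV"
    using g unfolding in_Hs_def a_def by simp
  have b_summable: "b summable_on UNIV"
    by (rule summable_on_comparison_test[OF summable_on_cmult_right[OF a_summable]])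
       (use b_le in \<open>auto simp: b_def\<close>)
  have "infsum b UNIV \<le> \<epsilon>\<^sup>2 * infsum a UNIV"
    using infsum_mono[OF b_summable summable_on_cmult_right[OF a_summable] b_le]
    by (simp add: infsum_cmult_right')
  then have "sqrt (infsum b UNIV) \<le> sqrt (\<epsilon>\<^sup>2 * infsum a UNIV)"
    by simp
  also have "\<dots> = \<epsilon> * sqrt (infsum a UNIV)"
    using \<epsilon> by (simp add: real_sqrt_mult)
  finally show ?thesis
    unfolding Hs_norm_def a_def b_def .
qed

lemma abs_opnorm_multiplier_le:
  fixes \<mu> :: "int \<Rightarrow> real"
  assumes \<mu>: "\<And>n. sqrt (1 + (real_of_int n)\<^sup>2) * \<bar>\<mu> n\<bar> \<le> \<epsilon>"
  shows "\<bar>opnorm_Hm_H (\<lambda>g n. complex_of_real (\<mu> n) * g n)\<bar> \<le> \<epsilon>"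
proof -
  define q where "q g = Hs_norm (1/2) (\<lambda>n. complex_of_real (\<mu> n) * g n) / Hs_norm (-1/2) g" for g
  define A where "A = {q g | g. in_Hs (-1/2) g \<and> (\<exists>n. g n \<noteq> 0)}"
  have \<epsilon>: "0 \<le> \<epsilon>"
    using \<mu>[of 0] by simp
  have q_bounds: "0 \<le> q g \<and> q g \<le> \<epsilon>" if "in_Hs (-1/2) g" for g
  proof (cases "Hs_norm (-1/2) g = 0")
    case True
    then show ?thesis
      using \<epsilon> by (simp add: q_def)
  next
    case False
    then have "0 < Hs_norm (-1/2) g"
      using Hs_norm_nonneg by (simp add: less_le)
    then show ?thesis
      using Hs_norm_multiplier_le[OF \<mu> that] Hs_norm_nonneg
      by (simp add: q_def divide_le_eq mult.commute)
  qed
  define \<delta> :: "int \<Rightarrow> complex" where "\<delta> n = (if n = 0 then 1 else 0)" for n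
  have "in_Hs (-1/2) \<delta>"
    unfolding in_Hs_def \<delta>_def by (subst summable_on_cong_neutral[where T = "{0}"]) auto
  then have "q \<delta> \<in> A"
    unfolding A_def \<delta>_def by force
  moreover have "0 \<le> x \<and> x \<le> \<epsilon>" if "x \<in> A" for x
    using that q_bounds unfolding A_def by auto
  ultimately have "0 \<le> Sup A" "Sup A \<le> \<epsilon>"
    using cSup_upper[of "q \<delta>" A] cSup_least[of A \<epsilon>] by (force intro: bdd_aboveI)+
  then show ?thesis
    unfolding opnorm_Hm_H_def A_def q_def by simp
qed

lemma opnorm_multiplier_tendsto_0:
  fixes \<mu> :: "'a \<Rightarrow> int \<Rightarrow> real"
  assumes even: "\<And>p n. \<mu> p (- n) = \<mu> p n"
    and pointwise: "\<And>k. ((\<lambda>p. \<mu> p (int k)) \<longlongrightarrow> 0) F"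
    and tail: "\<And>\<epsilon>. 0 < \<epsilon> \<Longrightarrow>
      \<exists>N. \<forall>\<^sub>F p in F. \<forall>k\<ge>N. sqrt (1 + (real k)\<^sup>2) * \<bar>\<mu> p (int k)\<bar> \<le> \<epsilon>"
  shows "((\<lambda>p. opnorm_Hm_H (\<lambda>g n. complex_of_real (\<mu> p n) * g n)) \<longlongrightarrow> 0) F"
proof (rule tendstoI)
  fix e :: real
  assume e: "0 < e"
  obtain N where tail_N: "\<forall>\<^sub>F p in F. \<forall>k\<ge>N. sqrt (1 + (real k)\<^sup>2) * \<bar>\<mu> p (int k)\<bar> \<le> e/2"
    using tail[of "e/2"] e by auto
  have "((\<lambda>p. sqrt (1 + (real k)\<^sup>2) * \<bar>\<mu> p (int k)\<bar>) \<longlongrightarrow> 0) F" for k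
    by (intro tendsto_mult_right_zero tendsto_rabs_zero pointwise)
  then have "\<forall>\<^sub>F p in F. sqrt (1 + (real k)\<^sup>2) * \<bar>\<mu> p (int k)\<bar> < e/2" for k
    using e by (intro order_tendstoD(2)) auto
  then have head_N: "\<forall>\<^sub>F p in F. \<forall>k\<in>{..<N}. sqrt (1 + (real k)\<^sup>2) * \<bar>\<mu> p (int k)\<bar> < e/2"
    by (intro eventually_ball_finite) auto
  show "\<forall>\<^sub>F p in F. dist (opnorm_Hm_H (\<lambda>g n. complex_of_real (\<mu> p n) * g n)) 0 < e"
    using tail_N head_N
  proof eventually_elim
    case (elim p)
    then have nat_bound: "sqrt (1 + (real k)\<^sup>2) * \<bar>\<mu> p (int k)\<bar> \<le> e/2" for k
      by (cases "k < N") (auto simp: less_imp_le)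
    have "sqrt (1 + (real_of_int n)\<^sup>2) * \<bar>\<mu> p n\<bar> \<le> e/2" for n
    proof (cases "0 \<le> n")
      case True
      then show ?thesis
        using nat_bound[of "nat n"] by simp
    next
      case False
      then show ?thesis
        using nat_bound[of "nat (- n)"] even[of p "- n"] by simp
    qed
    then have "\<bar>opnorm_Hm_H (\<lambda>g n. complex_of_real (\<mu> p n) * g n)\<bar> \<le> e/2"
      by (rule abs_opnorm_multiplier_le)
    then show ?case
      using e by (simp add: dist_real_def)
  qed
qed

section \<open>The modified Bessel functions I_k\<close>

definition I_coeff :: "nat \<Rightarrow> nat \<Rightarrow> real" where
  "I_coeff k j = 1 / (fact j * fact (j + k))"

definition I_series :: "nat \<Rightarrow> real \<Rightarrow> real" where
  "I_series k y = (\<Sum>j. I_coeff k j * y ^ j)"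

definition I_series' :: "nat \<Rightarrow> real \<Rightarrow> real" where
  "I_series' k y = (\<Sum>j. diffs (I_coeff k) j * y ^ j)"

lemma I_coeff_pos: "0 < I_coeff k j"
  by (simp add: I_coeff_def)

lemma diffs_I_coeff: "diffs (I_coeff k) j = I_coeff k j / (j + k + 1)"
proof -
  have "real (Suc j) / fact (Suc j) = 1 / fact j"
    by simp
  moreover have "(fact (Suc j + k) :: real) = (j + k + 1) * fact (j + k)"
    by (simp add: algebra_simps)
  ultimately show ?thesis
    by (simp add: diffs_def I_coeff_def mult_ac)
qed

lemma summable_I_series: "summable (\<lambda>j. I_coeff k j * y ^ j)"
proof (rule summable_comparison_test'[OF summable_exp[of "\<bar>y\<bar>"]])
  fix j
  have "I_coeff k j \<le> inverse (fact j)"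
    unfolding I_coeff_def by (simp add: divide_simps)
  then show "norm (I_coeff k j * y ^ j) \<le> inverse (fact j) * \<bar>y\<bar> ^ j"
    using I_coeff_pos[of k j] by (simp add: abs_mult power_abs mult_right_mono)
qed

lemma summable_I_series': "summable (\<lambda>j. diffs (I_coeff k) j * y ^ j)"
  by (rule termdiff_converges_all) (rule summable_I_series)

lemma I_series_has_derivative: "(I_series k has_real_derivative I_series' k y) (at y)"
  unfolding I_series_def I_series'_def
  by (rule termdiffs_strong_converges_everywhere) (rule summable_I_series)

lemma isCont_I_series: "isCont (I_series k) y"
  using I_series_has_derivative DERIV_isCont by blast

lemma isCont_I_series': "isCont (I_series' k) y"
  unfolding I_series'_def[abs_def]
  by (rule isCont_powser_converges_everywhere) (rule summable_I_series')

lemma I_series_pos: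
  assumes "0 \<le> y"
  shows "0 < I_series k y"
proof -
  have "I_coeff k 0 \<le> I_series k y"
    unfolding I_series_def
    using sum_le_suminf[OF summable_I_series, of "{0}"] assms I_coeff_pos[of k] by (simp add: less_imp_le)
  then show ?thesis
    using I_coeff_pos[of k 0] by linarith
qed

lemma I_series'_pos:
  assumes "0 \<le> y"
  shows "0 < I_series' k y"
proof -
  have "diffs (I_coeff k) 0 \<le> I_series' k y"
    unfolding I_series'_def
    using sum_le_suminf[OF summable_I_series', of "{0}"] assms I_coeff_pos[of k]
    by (simp add: diffs_I_coeff less_imp_le)
  moreover have "0 < diffs (I_coeff k) 0"
    by (simp add: diffs_I_coeff I_coeff_pos)
  ultimately show ?thesis
    by linarith
qed

lemma I_series'_le:
  assumes "0 \<le> y"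
  shows "I_series' k y \<le> I_series k y / (k + 1)"
proof -
  have "I_series' k y \<le> (\<Sum>j. I_coeff k j * y ^ j / (k + 1))"
    unfolding I_series'_def
  proof (rule suminf_le[OF _ summable_I_series' summable_divide[OF summable_I_series]])
    show "diffs (I_coeff k) j * y ^ j \<le> I_coeff k j * y ^ j / (k + 1)" for j
      using I_coeff_pos[of k j] assms by (simp add: diffs_I_coeff divide_left_mono)
  qed
  also have "\<dots> = I_series k y / (k + 1)"
    unfolding I_series_def by (rule suminf_divide[OF summable_I_series])
  finally show ?thesis .
qed

lemma I_series_mono: "0 \<le> y \<Longrightarrow> y \<le> z \<Longrightarrow> I_series k y \<le> I_series k z"
  unfolding I_series_def
  by (intro suminf_le summable_I_series mult_left_mono power_mono) (auto simp: I_coeff_pos less_imp_le)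

lemma bessel_I_nat: "bessel_I (int k) x = (x/2) ^ k * I_series k (x\<^sup>2/4)"
proof -
  have "(x/2) ^ (2 * j + k) = ((x/2)\<^sup>2) ^ j * (x/2) ^ k" for j
    by (simp add: power_add power_mult)
  then have "(x/2) ^ (2 * j + k) / (fact j * fact (j + k)) = (x/2) ^ k * (I_coeff k j * (x\<^sup>2/4) ^ j)" for j
    by (simp add: I_coeff_def power_divide mult_ac)
  then show ?thesis
    unfolding bessel_I_def I_series_def by (simp add: suminf_mult[OF summable_I_series])
qed

lemma bessel_I_minus: "bessel_I (- n) = bessel_I n"
  unfolding bessel_I_def[abs_def] by simp

lemma bessel_I'_minus: "bessel_I' (- n) = bessel_I' n"
  unfolding bessel_I'_def[abs_def] bessel_I_minus ..

lemma bessel_I_has_derivative: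
  "(bessel_I (int k) has_real_derivative
      real k * (x/2) ^ (k - 1) / 2 * I_series k (x\<^sup>2/4) + (x/2) ^ (k + 1) * I_series' k (x\<^sup>2/4)) (at x)"
proof -
  have "bessel_I (int k) = (\<lambda>x. (x/2) ^ k * I_series k (x\<^sup>2/4))"
    using bessel_I_nat by blast
  then show ?thesis
    by (auto intro!: derivative_eq_intros DERIV_chain2[OF I_series_has_derivative] simp: algebra_simps)
qed

lemma bessel_I'_nat:
  "bessel_I' (int k) x = real k * (x/2) ^ (k - 1) / 2 * I_series k (x\<^sup>2/4) + (x/2) ^ (k + 1) * I_series' k (x\<^sup>2/4)"
  unfolding bessel_I'_def using bessel_I_has_derivative by (rule DERIV_imp_deriv)

lemma isCont_bessel_I: "isCont (bessel_I (int k)) x"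
  using bessel_I_has_derivative by (rule DERIV_isCont)

lemma isCont_bessel_I': "isCont (bessel_I' (int k)) x"
proof -
  have "bessel_I' (int k) =
      (\<lambda>x. real k * (x/2) ^ (k - 1) / 2 * I_series k (x\<^sup>2/4) + (x/2) ^ (k + 1) * I_series' k (x\<^sup>2/4))"
    using bessel_I'_nat by blast
  then show ?thesis
    by (simp add: isCont_o2[OF _ isCont_I_series] isCont_o2[OF _ isCont_I_series'])
qed

lemma bessel_I'_nat_pos:
  assumes "0 < x"
  shows "bessel_I' (int k) x = k / x * bessel_I (int k) x + (x/2) ^ (k + 1) * I_series' k (x\<^sup>2/4)"
proof (cases k)
  case (Suc m)
  then have "real k * (x/2) ^ (k - 1) / 2 = k / x * (x/2) ^ k"
    using assms by (simp add: field_simps)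
  then show ?thesis
    by (simp add: bessel_I'_nat bessel_I_nat)
qed (use bessel_I'_nat[of 0 x] in simp)

lemma bessel_I_pos: "0 < x \<Longrightarrow> 0 < bessel_I (int k) x"
  by (simp add: bessel_I_nat I_series_pos)

lemma bessel_I'_lower: "0 < x \<Longrightarrow> k / x * bessel_I (int k) x \<le> bessel_I' (int k) x"
  by (simp add: bessel_I'_nat_pos I_series'_pos less_imp_le)

lemma bessel_I'_pos:
  assumes x: "0 < x"
  shows "0 < bessel_I' (int k) x"
proof -
  have "0 \<le> k / x * bessel_I (int k) x"
    using bessel_I_pos[OF x, of k] x by simp
  moreover have "0 < (x/2) ^ (k + 1) * I_series' k (x\<^sup>2/4)"
    using x by (simp add: I_series'_pos)
  ultimately show ?thesis
    using x by (simp add: bessel_I'_nat_pos)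
qed

lemma bessel_I'_upper:
  assumes x: "0 < x"
  shows "bessel_I' (int k) x \<le> (k / x + x / 2) * bessel_I (int k) x"
proof -
  have "I_series' k (x\<^sup>2/4) \<le> I_series k (x\<^sup>2/4) / (k + 1)"
    by (rule I_series'_le) simp
  also have "\<dots> \<le> I_series k (x\<^sup>2/4)"
    using I_series_pos[of "x\<^sup>2/4" k] by (simp add: divide_le_eq)
  finally have "(x/2) ^ (k + 1) * I_series' k (x\<^sup>2/4) \<le> x/2 * bessel_I (int k) x"
    using x by (simp add: bessel_I_nat mult_left_mono)
  then show ?thesis
    using x by (simp add: bessel_I'_nat_pos algebra_simps)
qed

lemma bessel_I_le_pow:
  assumes r: "0 < r" "r \<le> 1"
  shows "bessel_I (int k) r \<le> r ^ k * bessel_I (int k) 1"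
proof -
  have "I_series k (r\<^sup>2/4) \<le> I_series k (1/4)"
    using r by (intro I_series_mono) (auto simp: power_le_one)
  then show ?thesis
    using r by (simp add: bessel_I_nat mult_left_mono field_simps)
qed

section \<open>Integrals against exp (- x cosh t) and the functions K_n\<close>

definition exp_order :: "(real \<Rightarrow> real) \<Rightarrow> bool" where
  "exp_order w \<longleftrightarrow> continuous_on UNIV w \<and> (\<exists>C M. \<forall>t\<ge>0. \<bar>w t\<bar> \<le> C * exp (M * t))"

definition K_integral :: "(real \<Rightarrow> real) \<Rightarrow> real \<Rightarrow> real" where
  "K_integral w x = integral {0..} (\<lambda>t. exp (- x * cosh t) * w t)"

lemma exp_orderE:
  assumes "exp_order w"
  obtains C M where "0 \<le> C" "\<And>t. 0 \<le> t \<Longrightarrow> \<bar>w t\<bar> \<le> C * exp (M * t)"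
proof -
  obtain C M where CM: "\<And>t. 0 \<le> t \<Longrightarrow> \<bar>w t\<bar> \<le> C * exp (M * t)"
    using assms unfolding exp_order_def by blast
  moreover have "0 \<le> C"
    using CM[of 0] by simp
  ultimately show thesis
    using that by blast
qed

lemma continuous_on_exp_order: "exp_order w \<Longrightarrow> continuous_on A w"
  unfolding exp_order_def by (auto intro: continuous_on_subset)

lemma exp_order_le:
  assumes "exp_order v" "continuous_on UNIV w" "\<And>t. 0 \<le> t \<Longrightarrow> \<bar>w t\<bar> \<le> \<bar>v t\<bar>"
  shows "exp_order w"
  using assms unfolding exp_order_def by (meson order_trans)

lemma exp_order_const: "exp_order (\<lambda>t. c)"
  unfolding exp_order_def by (intro conjI exI[of _ "\<bar>c\<bar>"] exI[of _ 0]) auto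

lemma exp_order_abs:
  assumes "exp_order w"
  shows "exp_order (\<lambda>t. \<bar>w t\<bar>)"
  by (rule exp_order_le[OF assms]) (auto intro: continuous_intros continuous_on_exp_order[OF assms])

lemma exp_order_add:
  assumes "exp_order v" "exp_order w"
  shows "exp_order (\<lambda>t. v t + w t)"
proof -
  obtain C1 M1 where C1: "0 \<le> C1" and v: "\<And>t. 0 \<le> t \<Longrightarrow> \<bar>v t\<bar> \<le> C1 * exp (M1 * t)"
    by (rule exp_orderE[OF assms(1)]) blast
  obtain C2 M2 where C2: "0 \<le> C2" and w: "\<And>t. 0 \<le> t \<Longrightarrow> \<bar>w t\<bar> \<le> C2 * exp (M2 * t)"
    by (rule exp_orderE[OF assms(2)]) blast
  have "\<bar>v t + w t\<bar> \<le> (C1 + C2) * exp (max M1 M2 * t)" if t: "0 \<le> t" for t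
  proof -
    have "exp (M1 * t) \<le> exp (max M1 M2 * t)" "exp (M2 * t) \<le> exp (max M1 M2 * t)"
      using t by (auto intro: mult_right_mono)
    then have "C1 * exp (M1 * t) + C2 * exp (M2 * t) \<le> (C1 + C2) * exp (max M1 M2 * t)"
      using C1 C2 by (simp add: distrib_right add_mono mult_left_mono)
    then show ?thesis
      using v[OF t] w[OF t] by linarith
  qed
  moreover have "continuous_on UNIV (\<lambda>t. v t + w t)"
    using assms by (intro continuous_intros continuous_on_exp_order)
  ultimately show ?thesis
    unfolding exp_order_def by blast
qed

lemma exp_order_mult:
  assumes "exp_order v" "exp_order w"
  shows "exp_order (\<lambda>t. v t * w t)"
proof -
  obtain C1 M1 where C1: "0 \<le> C1" and v: "\<And>t. 0 \<le> t \<Longrightarrow> \<bar>v t\<bar> \<le> C1 * exp (M1 * t)"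
    by (rule exp_orderE[OF assms(1)]) blast
  obtain C2 M2 where w: "\<And>t. 0 \<le> t \<Longrightarrow> \<bar>w t\<bar> \<le> C2 * exp (M2 * t)"
    by (rule exp_orderE[OF assms(2)]) blast
  have "\<bar>v t * w t\<bar> \<le> (C1 * C2) * exp ((M1 + M2) * t)" if t: "0 \<le> t" for t
  proof -
    have "\<bar>v t * w t\<bar> \<le> (C1 * exp (M1 * t)) * (C2 * exp (M2 * t))"
      unfolding abs_mult using v[OF t] w[OF t] C1 by (intro mult_mono) auto
    then show ?thesis
      by (simp add: ring_distribs exp_add mult_ac)
  qed
  moreover have "continuous_on UNIV (\<lambda>t. v t * w t)"
    using assms by (intro continuous_intros continuous_on_exp_order)
  ultimately show ?thesis
    unfolding exp_order_def by blast
qed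

lemma cosh_le_exp_abs: "cosh (y :: real) \<le> exp \<bar>y\<bar>"
  unfolding cosh_field_def by (cases "0 \<le> y") auto

lemma exp_order_cosh: "exp_order (\<lambda>t. cosh (a * t))"
  unfolding exp_order_def
proof (intro conjI exI allI impI)
  fix t :: real
  assume t: "0 \<le> t"
  have "cosh (a * t) \<le> exp \<bar>a * t\<bar>"
    by (rule cosh_le_exp_abs)
  then show "\<bar>cosh (a * t)\<bar> \<le> 1 * exp (\<bar>a\<bar> * t)"
    using t by (simp add: abs_mult)
qed (intro continuous_intros)

lemma exp_order_sinh: "exp_order (\<lambda>t. sinh (a * t))"
proof (rule exp_order_le[OF exp_order_cosh])
  show "\<bar>sinh (a * t)\<bar> \<le> \<bar>cosh (a * t)\<bar>" for t
    using sinh_le_cosh_real[of "a * t"] sinh_le_cosh_real[of "- a * t"] by (simp add: abs_le_iff)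
qed (intro continuous_intros)

lemma exp_minus_cosh_le:
  fixes x t M :: real
  assumes x: "0 < x" and t: "0 \<le> t"
  shows "exp (M * t - x * cosh t) \<le> exp ((M + 1)\<^sup>2 / x) * exp (- t)"
proof -
  have "t\<^sup>2 / 2 \<le> exp t"
    using exp_lower_Taylor_quadratic[OF t] t by linarith
  then have "t\<^sup>2 / 4 \<le> cosh t"
    unfolding cosh_field_def by (simp add: field_simps add_increasing2)
  then have "x * (t\<^sup>2 / 4) \<le> x * cosh t"
    using x by simp
  moreover have "(M + 1) * t - x * t\<^sup>2 / 4 \<le> (M + 1)\<^sup>2 / x"
    using x zero_le_power2[of "x * t / 2 - (M + 1)"] by (simp add: field_simps power2_eq_square)
  ultimately have "M * t - x * cosh t \<le> (M + 1)\<^sup>2 / x + - t"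
    by (simp add: algebra_simps)
  then show ?thesis
    by (simp flip: exp_add)
qed

lemma K_integrand_bound:
  assumes w: "exp_order w" and x: "0 < x"
  obtains B where "\<And>t. 0 \<le> t \<Longrightarrow> \<bar>exp (- x * cosh t) * w t\<bar> \<le> B * exp (- t)"
proof -
  obtain C M where C: "0 \<le> C" and CM: "\<And>t. 0 \<le> t \<Longrightarrow> \<bar>w t\<bar> \<le> C * exp (M * t)"
    by (rule exp_orderE[OF w]) blast
  have "\<bar>exp (- x * cosh t) * w t\<bar> \<le> C * exp ((M + 1)\<^sup>2 / x) * exp (- t)" if t: "0 \<le> t" for t
  proof -
    have "\<bar>exp (- x * cosh t) * w t\<bar> \<le> exp (- x * cosh t) * (C * exp (M * t))"
      using CM[OF t] by (simp add: abs_mult mult_left_mono)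
    also have "\<dots> = C * exp (M * t - x * cosh t)"
      by (simp add: exp_diff exp_minus field_simps)
    also have "\<dots> \<le> C * (exp ((M + 1)\<^sup>2 / x) * exp (- t))"
      using exp_minus_cosh_le[OF x t] C by (rule mult_left_mono)
    finally show ?thesis
      by (simp add: mult_ac)
  qed
  then show thesis
    by (rule that)
qed

lemma K_integrand_tendsto_0:
  assumes "exp_order w" "0 < x"
  shows "((\<lambda>t. exp (- x * cosh t) * w t) \<longlongrightarrow> 0) at_top"
proof -
  obtain B where B: "\<And>t. 0 \<le> t \<Longrightarrow> \<bar>exp (- x * cosh t) * w t\<bar> \<le> B * exp (- t)"
    using K_integrand_bound[OF assms] by blast
  have "((\<lambda>t. B * exp (- t)) \<longlongrightarrow> B * 0) at_top"
    by (intro tendsto_intros filterlim_compose[OF exp_at_bot filterlim_uminus_at_bot_at_top])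
  moreover have "\<forall>\<^sub>F t in at_top. norm (exp (- x * cosh t) * w t) \<le> B * exp (- t)"
    using B by (intro eventually_mono[OF eventually_ge_at_top[of 0]]) auto
  ultimately show ?thesis
    by (auto intro: Lim_null_comparison)
qed

lemma K_integrand_absolutely_integrable:
  assumes w: "exp_order w" and x: "0 < x"
  shows "(\<lambda>t. exp (- x * cosh t) * w t) absolutely_integrable_on {0..}"
proof -
  obtain B where B: "\<And>t. 0 \<le> t \<Longrightarrow> \<bar>exp (- x * cosh t) * w t\<bar> \<le> B * exp (- t)"
    using K_integrand_bound[OF w x] by blast
  have "continuous_on {0..} (\<lambda>t. exp (- x * cosh t) * w t)"
    using w by (intro continuous_intros continuous_on_exp_order)
  moreover have "(\<lambda>t. B * exp (- t)) integrable_on {0..}"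
    using integrable_on_cmult_left[OF integrable_on_exp_minus_to_infinity[of 1 0], of B] by simp
  ultimately show ?thesis
    using B
    by (intro measurable_bounded_by_integrable_imp_absolutely_integrable[OF
          continuous_imp_measurable_on_sets_lebesgue]) auto
qed

lemma K_integrand_integrable:
  "exp_order w \<Longrightarrow> 0 < x \<Longrightarrow> (\<lambda>t. exp (- x * cosh t) * w t) integrable_on {0..}"
  using K_integrand_absolutely_integrable absolutely_integrable_on_def by blast

lemma K_integral:
  "exp_order w \<Longrightarrow> 0 < x \<Longrightarrow> ((\<lambda>t. exp (- x * cosh t) * w t) has_integral K_integral w x) {0..}"
  unfolding K_integral_def by (rule integrable_integral) (rule K_integrand_integrable)

lemma exp_second_order_bound:
  fixes x y u :: real
  assumes x: "0 < x" and xy: "\<bar>y - x\<bar> < x / 2" and u: "0 \<le> u"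
  shows "\<bar>exp (- y * u) - exp (- x * u) + (y - x) * u * exp (- x * u)\<bar>
    \<le> (y - x)\<^sup>2 / 2 * (u\<^sup>2 * exp (- (x / 2) * u))"
proof -
  define z where "z = (x - y) * u"
  obtain s where s: "\<bar>s\<bar> \<le> \<bar>z\<bar>" and exp_z: "exp z = 1 + z + exp s / 2 * z\<^sup>2"
    using Maclaurin_exp_le[of z 2] by (auto simp: numeral_2_eq_2)
  have "exp (- y * u) - exp (- x * u) + (y - x) * u * exp (- x * u) = exp (- x * u) * (exp z - 1 - z)"
    unfolding z_def by (simp add: algebra_simps flip: exp_add)
  also have "\<dots> = exp (- x * u + s) * z\<^sup>2 / 2"
    unfolding exp_z exp_add by (simp add: algebra_simps)
  finally have eq: "exp (- y * u) - exp (- x * u) + (y - x) * u * exp (- x * u) = exp (- x * u + s) * z\<^sup>2 / 2" .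
  have "\<bar>z\<bar> = \<bar>y - x\<bar> * u"
    unfolding z_def using u by (simp add: abs_mult abs_minus_commute)
  also have "\<dots> \<le> x / 2 * u"
    using xy u by (intro mult_right_mono) auto
  finally have "\<bar>z\<bar> \<le> x / 2 * u" .
  then have "exp (- x * u + s) \<le> exp (- (x / 2) * u)"
    using s by simp
  then have "exp (- x * u + s) * z\<^sup>2 / 2 \<le> exp (- (x / 2) * u) * z\<^sup>2 / 2"
    by (simp add: mult_right_mono divide_right_mono)
  also have "\<dots> = (y - x)\<^sup>2 / 2 * (u\<^sup>2 * exp (- (x / 2) * u))"
    unfolding z_def by (simp add: power2_eq_square algebra_simps)
  finally show ?thesis
    unfolding eq by simp
qed

lemma K_integral_second_order_bound:
  assumes w: "exp_order w" and x: "0 < x" and xy: "\<bar>y - x\<bar> < x / 2"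
  shows "\<bar>K_integral w y - K_integral w x + (y - x) * K_integral (\<lambda>t. cosh t * w t) x\<bar>
    \<le> (y - x)\<^sup>2 / 2 * K_integral (\<lambda>t. cosh t * (cosh t * \<bar>w t\<bar>)) (x / 2)"
proof -
  have y: "0 < y"
    using x xy by linarith
  have cosh: "exp_order (\<lambda>t. cosh t)"
    using exp_order_cosh[of 1] by simp
  define f where "f t = exp (- y * cosh t) * w t - exp (- x * cosh t) * w t
    + (y - x) * (exp (- x * cosh t) * (cosh t * w t))" for t
  define g where "g t = (y - x)\<^sup>2 / 2 * (exp (- (x / 2) * cosh t) * (cosh t * (cosh t * \<bar>w t\<bar>)))" for t
  have cosh_w: "exp_order (\<lambda>t. cosh t * w t)"
    by (rule exp_order_mult[OF cosh w])
  have cosh_cosh_w: "exp_order (\<lambda>t. cosh t * (cosh t * \<bar>w t\<bar>))"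
    by (rule exp_order_mult[OF cosh exp_order_mult[OF cosh exp_order_abs[OF w]]])
  have f: "(f has_integral K_integral w y - K_integral w x + (y - x) * K_integral (\<lambda>t. cosh t * w t) x) {0..}"
    unfolding f_def
    by (intro has_integral_add has_integral_diff has_integral_mult_right K_integral[OF w y]
        K_integral[OF w x] K_integral[OF cosh_w x])
  have g: "(g has_integral (y - x)\<^sup>2 / 2 * K_integral (\<lambda>t. cosh t * (cosh t * \<bar>w t\<bar>)) (x / 2)) {0..}"
    unfolding g_def using x by (intro has_integral_mult_right K_integral[OF cosh_cosh_w]) simp
  have "norm (f t) \<le> g t" if "t \<in> {0..}" for t
  proof -
    have "norm (f t) = \<bar>exp (- y * cosh t) - exp (- x * cosh t) + (y - x) * cosh t * exp (- x * cosh t)\<bar> * \<bar>w t\<bar>"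
      unfolding f_def by (simp add: algebra_simps flip: abs_mult)
    also have "\<dots> \<le> (y - x)\<^sup>2 / 2 * ((cosh t)\<^sup>2 * exp (- (x / 2) * cosh t)) * \<bar>w t\<bar>"
      by (rule mult_right_mono[OF exp_second_order_bound[OF x xy cosh_real_nonneg]]) simp
    also have "\<dots> = g t"
      unfolding g_def by (simp add: power2_eq_square mult_ac)
    finally show ?thesis .
  qed
  then have "norm (integral {0..} f) \<le> integral {0..} g"
    using f g by (intro integral_norm_bound_integral) auto
  then show ?thesis
    unfolding integral_unique[OF f] integral_unique[OF g] by simp
qed

lemma K_integral_has_derivative:
  assumes w: "exp_order w" and x: "0 < x"
  shows "(K_integral w has_real_derivative - K_integral (\<lambda>t. cosh t * w t) x) (at x)"
proof -
  define D where "D = - K_integral (\<lambda>t. cosh t * w t) x"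
  define G where "G = K_integral (\<lambda>t. cosh t * (cosh t * \<bar>w t\<bar>)) (x / 2)"
  have "norm ((K_integral w y - K_integral w x) / (y - x) - D) \<le> \<bar>y - x\<bar> / 2 * G"
    if "y \<noteq> x" "dist y x < x / 2" for y
  proof -
    have close: "\<bar>y - x\<bar> < x / 2"
      using that by (simp add: dist_real_def)
    have "norm ((K_integral w y - K_integral w x) / (y - x) - D)
        = \<bar>K_integral w y - K_integral w x - (y - x) * D\<bar> / \<bar>y - x\<bar>"
      using that by (simp add: field_simps flip: abs_divide)
    also have "\<dots> \<le> ((y - x)\<^sup>2 / 2 * G) / \<bar>y - x\<bar>"
      using K_integral_second_order_bound[OF w x close] unfolding D_def G_def
      by (intro divide_right_mono) simp_all
    also have "\<dots> = \<bar>y - x\<bar> / 2 * G"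
      using that by (simp add: power2_eq_square field_simps abs_mult_self_eq)
    finally show ?thesis .
  qed
  then have "\<forall>\<^sub>F y in at x. norm ((K_integral w y - K_integral w x) / (y - x) - D) \<le> \<bar>y - x\<bar> / 2 * G"
    unfolding eventually_at using x by (intro exI[of _ "x / 2"]) auto
  moreover have "((\<lambda>y. \<bar>y - x\<bar> / 2 * G) \<longlongrightarrow> \<bar>x - x\<bar> / 2 * G) (at x)"
    by (intro tendsto_intros) simp
  then have "((\<lambda>y. \<bar>y - x\<bar> / 2 * G) \<longlongrightarrow> 0) (at x)"
    by simp
  ultimately have "((\<lambda>y. (K_integral w y - K_integral w x) / (y - x) - D) \<longlongrightarrow> 0) (at x)"
    by (rule Lim_null_comparison)
  then have "((\<lambda>y. (K_integral w y - K_integral w x) / (y - x)) \<longlongrightarrow> D) (at x)"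
    by (simp add: Lim_null[symmetric])
  then show ?thesis
    unfolding D_def has_field_derivative_iff .
qed

lemma K_integral_antimono:
  assumes w: "exp_order w" and w_nonneg: "\<And>t. 0 \<le> t \<Longrightarrow> 0 \<le> w t" and x: "0 < x" and xy: "x \<le> y"
  shows "K_integral w y \<le> K_integral w x"
  unfolding K_integral_def
proof (rule integral_le)
  show "(\<lambda>t. exp (- y * cosh t) * w t) integrable_on {0..}"
    using x xy by (intro K_integrand_integrable[OF w]) simp
  show "(\<lambda>t. exp (- x * cosh t) * w t) integrable_on {0..}"
    by (rule K_integrand_integrable[OF w x])
  fix t :: real
  assume "t \<in> {0..}"
  then have "0 \<le> w t"
    by (simp add: w_nonneg)
  moreover have "exp (- y * cosh t) \<le> exp (- x * cosh t)"
    using xy by (simp add: mult_right_mono)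
  ultimately show "exp (- y * cosh t) * w t \<le> exp (- x * cosh t) * w t"
    by (rule mult_right_mono[rotated])
qed

lemma K_integral_pos:
  assumes w: "exp_order w" and w_ge: "\<And>t. 0 \<le> t \<Longrightarrow> 1 \<le> w t" and x: "0 < x"
  shows "0 < K_integral w x"
proof -
  let ?f = "\<lambda>t. exp (- x * cosh t) * w t"
  have f: "?f integrable_on {0..}"
    by (rule K_integrand_integrable[OF w x])
  have f01: "?f integrable_on {0..1}"
    by (rule integrable_on_subinterval[OF f]) auto
  have "exp (- x * exp 1) \<le> ?f t" if "t \<in> {0..1}" for t
  proof -
    have "cosh t \<le> exp \<bar>t\<bar>"
      by (rule cosh_le_exp_abs)
    also have "\<dots> \<le> exp 1"
      using that by simp
    finally have "exp (- x * exp 1) \<le> exp (- x * cosh t)"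
      using x by simp
    also have "\<dots> \<le> ?f t"
      using w_ge[of t] that by simp
    finally show ?thesis .
  qed
  then have "integral {0..1} (\<lambda>t::real. exp (- x * exp 1)) \<le> integral {0..1} ?f"
    using f01 by (intro integral_le) auto
  then have "exp (- x * exp 1) \<le> integral {0..1} ?f"
    by simp
  also have "\<dots> \<le> integral {0..} ?f"
  proof (rule integral_subset_le[OF _ f01 f])
    show "\<forall>t\<in>{0..}. 0 \<le> ?f t"
    proof
      fix t :: real
      assume "t \<in> {0..}"
      then have "0 \<le> w t"
        using w_ge[of t] by simp
      then show "0 \<le> ?f t"
        by simp
    qed
  qed auto
  finally show ?thesis
    unfolding K_integral_def using exp_gt_zero less_le_trans by blast
qed

lemma fundamental_theorem_of_calculus_at_top:
  fixes F h H :: "real \<Rightarrow> real"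
  assumes deriv: "\<And>t. (F has_real_derivative h t) (at t)"
    and dom: "\<And>t. 0 \<le> t \<Longrightarrow> \<bar>h t\<bar> \<le> H t" and H: "H integrable_on {0..}"
    and lim: "(F \<longlongrightarrow> 0) at_top"
  shows "(h has_integral - F 0) {0..}"
proof -
  define f where "f j t = (if t \<in> {0..real j} then h t else 0)" for j :: nat and t
  have f: "(f j has_integral F (real j) - F 0) {0..}" for j
  proof -
    have "(h has_integral F (real j) - F 0) {0..real j}"
      by (rule fundamental_theorem_of_calculus)
         (auto simp: has_real_derivative_iff_has_vector_derivative[symmetric]
           intro: has_field_derivative_at_within[OF deriv])
    then show ?thesis
      unfolding f_def by (subst has_integral_restrict) auto
  qed
  have "\<forall>t\<in>{0..}. norm (f j t) \<le> H t" for j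
    using dom by (auto simp: f_def intro: order_trans[OF abs_ge_zero])
  moreover have "\<forall>t\<in>{0..}. (\<lambda>j. f j t) \<longlonglongrightarrow> h t"
  proof
    fix t :: real
    have "\<forall>\<^sub>F j in sequentially. f j t = h t" if "0 \<le> t"
    proof (rule eventually_sequentiallyI)
      fix j
      assume "nat \<lceil>t\<rceil> \<le> j"
      then have "t \<le> real j"
        by linarith
      then show "f j t = h t"
        using that by (simp add: f_def)
    qed
    then show "t \<in> {0..} \<Longrightarrow> (\<lambda>j. f j t) \<longlonglongrightarrow> h t"
      by (simp add: tendsto_eventually)
  qed
  moreover have "(\<lambda>j. F (real j) - F 0) \<longlonglongrightarrow> 0 - F 0"
    using filterlim_compose[OF lim filterlim_real_sequentially] by (intro tendsto_intros)
  ultimately show ?thesis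
    using has_integral_dominated_convergence[OF f H] by simp
qed

lemma K_integral_sinh_sinh:
  assumes x: "0 < x"
  shows "x * K_integral (\<lambda>t. sinh t * sinh (a * t)) x = a * K_integral (\<lambda>t. cosh (a * t)) x"
proof -
  define F where "F t = exp (- x * cosh t) * sinh (a * t)" for t
  define h where "h t = exp (- x * cosh t) * (a * cosh (a * t) - x * (sinh t * sinh (a * t)))" for t
  define H where "H t = exp (- x * cosh t) * (\<bar>a\<bar> * cosh (a * t) + x * \<bar>sinh t * sinh (a * t)\<bar>)" for t
  have sinh: "exp_order sinh"
    using exp_order_sinh[of 1] by simp
  have sinh_sinh: "exp_order (\<lambda>t. sinh t * sinh (a * t))"
    by (rule exp_order_mult[OF sinh exp_order_sinh])
  have "(h has_integral - F 0) {0..}"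
  proof (rule fundamental_theorem_of_calculus_at_top)
    show "(F has_real_derivative h t) (at t)" for t
      unfolding F_def h_def by (auto intro!: derivative_eq_intros simp: algebra_simps)
    show "\<bar>h t\<bar> \<le> H t" for t
    proof -
      have "\<bar>a * cosh (a * t) - x * (sinh t * sinh (a * t))\<bar> \<le> \<bar>a\<bar> * cosh (a * t) + x * \<bar>sinh t * sinh (a * t)\<bar>"
        using abs_triangle_ineq4[of "a * cosh (a * t)" "x * (sinh t * sinh (a * t))"] x by (simp add: abs_mult)
      then show ?thesis
        unfolding h_def H_def abs_mult[of "exp _"] by (simp add: mult_left_mono)
    qed
    show "H integrable_on {0..}"
      unfolding H_def
      by (intro K_integrand_integrable x exp_order_add exp_order_mult[OF exp_order_const]
          exp_order_cosh exp_order_abs sinh_sinh)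
    show "(F \<longlongrightarrow> 0) at_top"
      unfolding F_def by (rule K_integrand_tendsto_0[OF exp_order_sinh x])
  qed
  moreover have "(h has_integral a * K_integral (\<lambda>t. cosh (a * t)) x - x * K_integral (\<lambda>t. sinh t * sinh (a * t)) x) {0..}"
    unfolding h_def right_diff_distrib
    using has_integral_diff[OF has_integral_mult_right[OF K_integral[OF exp_order_cosh[of a] x], of a]
        has_integral_mult_right[OF K_integral[OF sinh_sinh x], of x]]
    by (simp add: mult_ac)
  ultimately have "- F 0 = a * K_integral (\<lambda>t. cosh (a * t)) x - x * K_integral (\<lambda>t. sinh t * sinh (a * t)) x"
    by (rule has_integral_unique)
  then show ?thesis
    by (simp add: F_def)
qed

lemma bessel_K_eq: "bessel_K n = K_integral (\<lambda>t. cosh (of_int n * t))"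
  unfolding bessel_K_def[abs_def] K_integral_def[abs_def] ..

lemma bessel_K_minus: "bessel_K (- n) = bessel_K n"
  unfolding bessel_K_eq by (metis cosh_minus mult_minus_left of_int_minus)

lemma bessel_K'_minus: "bessel_K' (- n) = bessel_K' n"
  unfolding bessel_K'_def[abs_def] bessel_K_minus ..

lemma bessel_K'_eq: "0 < x \<Longrightarrow> bessel_K' n x = - K_integral (\<lambda>t. cosh t * cosh (of_int n * t)) x"
  unfolding bessel_K'_def bessel_K_eq by (intro DERIV_imp_deriv K_integral_has_derivative exp_order_cosh)

lemma exp_order_cosh_cosh: "exp_order (\<lambda>t. cosh t * cosh (a * t))"
  using exp_order_mult[OF exp_order_cosh[of 1] exp_order_cosh[of a]] by simp

lemma bessel_K_pos: "0 < x \<Longrightarrow> 0 < bessel_K n x"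
  unfolding bessel_K_eq by (intro K_integral_pos exp_order_cosh) (auto simp: cosh_real_ge_1)

lemma bessel_K_antimono: "0 < x \<Longrightarrow> x \<le> y \<Longrightarrow> bessel_K n y \<le> bessel_K n x"
  unfolding bessel_K_eq by (intro K_integral_antimono exp_order_cosh) auto

lemma bessel_K'_neg:
  assumes "0 < x"
  shows "bessel_K' n x < 0"
proof -
  have "1 \<le> cosh t * cosh (of_int n * t)" for t :: real
    using cosh_real_ge_1[of t] cosh_real_ge_1[of "of_int n * t"] by (metis mult_mono' mult_1 zero_le_one)
  then have "0 < K_integral (\<lambda>t. cosh t * cosh (of_int n * t)) x"
    using assms by (intro K_integral_pos exp_order_cosh_cosh)
  then show ?thesis
    using assms by (simp add: bessel_K'_eq)
qed

lemma minus_bessel_K'_antimono: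
  assumes "0 < x" "x \<le> y"
  shows "- bessel_K' n y \<le> - bessel_K' n x"
  using assms K_integral_antimono[OF exp_order_cosh_cosh _ assms]
  by (simp add: bessel_K'_eq)

text \<open>The recurrence -K_k' = (k / x) K_k + K_(k-1) in integral form, with K_(k-1) <= K_k.\<close>

lemma minus_bessel_K'_le:
  assumes k: "1 \<le> k" and x: "0 < x"
  shows "- bessel_K' (int k) x \<le> (k / x + 1) * bessel_K (int k) x"
proof -
  have cosh_split: "cosh t * cosh (k * t) = sinh t * sinh (k * t) + cosh ((real k - 1) * t)" for t :: real
  proof -
    have "cosh ((real k - 1) * t) = cosh (k * t - t)"
      by (simp add: algebra_simps)
    then show ?thesis
      by (simp add: cosh_diff mult_ac)
  qed
  have sinh_sinh: "exp_order (\<lambda>t. sinh t * sinh (k * t))"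
    using exp_order_mult[OF exp_order_sinh[of 1] exp_order_sinh[of k]] by simp
  have "((\<lambda>t. exp (- x * cosh t) * (cosh t * cosh (k * t))) has_integral
      K_integral (\<lambda>t. sinh t * sinh (k * t)) x + K_integral (\<lambda>t. cosh ((real k - 1) * t)) x) {0..}"
    unfolding cosh_split distrib_left
    by (intro has_integral_add K_integral[OF sinh_sinh x] K_integral[OF exp_order_cosh x])
  then have "- bessel_K' (int k) x = k / x * bessel_K (int k) x + K_integral (\<lambda>t. cosh ((real k - 1) * t)) x"
    using K_integral_sinh_sinh[OF x, of k] x
    by (simp add: bessel_K'_eq bessel_K_eq K_integral_def integral_unique field_simps)
  moreover have "K_integral (\<lambda>t. cosh ((real k - 1) * t)) x \<le> bessel_K (int k) x"
    unfolding bessel_K_eq K_integral_def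
  proof (intro integral_le K_integrand_integrable exp_order_cosh x)
    show "exp (- x * cosh t) * cosh ((real k - 1) * t) \<le> exp (- x * cosh t) * cosh (real_of_int (int k) * t)"
      if "t \<in> {0..}" for t
      using that k by (simp add: cosh_real_nonneg_le_iff mult_right_mono)
  qed
  ultimately show ?thesis
    by (simp add: algebra_simps)
qed

section \<open>The coefficients rho_n\<close>

definition rho_const :: "real \<Rightarrow> real" where
  "rho_const \<sigma> = 1 + 3 / (2 * \<sigma> * sqrt \<sigma>)"

lemma rho_const_pos: "0 < \<sigma> \<Longrightarrow> 0 < rho_const \<sigma>"
  unfolding rho_const_def by (simp add: add_pos_nonneg)

lemma rho_const_le_7:
  assumes "1/2 \<le> \<sigma>"
  shows "rho_const \<sigma> \<le> 7"
proof -
  have "1/2 \<le> sqrt (1/2 :: real)"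
    by (rule real_le_rsqrt) (simp add: power2_eq_square)
  also have "\<dots> \<le> sqrt \<sigma>"
    using assms by simp
  finally have "1/2 * (1/2) \<le> \<sigma> * sqrt \<sigma>"
    using assms by (intro mult_mono) auto
  then have "3 / (2 * \<sigma> * sqrt \<sigma>) \<le> 3 / (1/2)"
    by (intro divide_left_mono) auto
  then show ?thesis
    unfolding rho_const_def by simp
qed

lemma rho_minus: "rho \<sigma> r (- n) = rho \<sigma> r n"
  unfolding rho_def bessel_I_minus bessel_I'_minus bessel_K_minus bessel_K'_minus ..

lemma abs_divide_le_divide:
  fixes n d d0 x :: real
  assumes "\<bar>n\<bar> \<le> x" "0 < d0" "d0 \<le> d"
  shows "\<bar>n / d\<bar> \<le> x / d0"
proof -
  have "\<bar>n / d\<bar> = \<bar>n\<bar> / d"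
    using assms by (simp add: abs_divide)
  also have "\<dots> \<le> x / d0"
    using assms by (intro frac_le) auto
  finally show ?thesis .
qed

text \<open>In the next two lemmas P, I_a stand for I_k'(a), I_k(a) with a = r / sqrt sigma, and
  I_r, J_r, K_r, K_r' for I_k(r), I_k'(r), K_k(r), K_k'(r).\<close>

lemma rho_bound_real:
  fixes \<sigma> r a k P I_a I_r J_r K_r K_r' :: real
  assumes \<sigma>: "0 < \<sigma>" and r: "0 < r" "r \<le> 1" and a: "a = r / sqrt \<sigma>" and k: "1 \<le> k"
    and I_a: "0 < I_a" and I_r: "0 < I_r" and P: "k / a * I_a \<le> P"
    and J_r: "0 \<le> J_r" "J_r \<le> (k / r + r / 2) * I_r" and K_r: "0 < K_r" and K_r': "K_r' \<le> 0"
  shows "\<bar>(\<sigma> * P * I_r - I_a * J_r) / (\<sigma> * P * K_r - I_a * K_r')\<bar> \<le> rho_const \<sigma> * I_r / K_r"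
proof -
  have a_pos: "0 < a"
    using a r \<sigma> by simp
  then have "0 < k / a * I_a"
    using k I_a by simp
  then have P_pos: "0 < P"
    using P by linarith
  have "r / 2 \<le> k / (2 * r)"
    using r k mult_le_one[of r r] by (simp add: field_simps)
  then have "k / r + r / 2 \<le> k / r + k / (2 * r)"
    by simp
  also have "\<dots> = 3 / 2 * k / r"
    by (simp add: field_simps)
  finally have "J_r \<le> (3 / 2 * k / r) * I_r"
    using J_r(2) mult_right_mono[of _ _ I_r] I_r by fastforce
  moreover have "I_a \<le> a * P / k"
    using P a_pos k by (simp add: field_simps)
  ultimately have "I_a * J_r \<le> (a * P / k) * ((3 / 2 * k / r) * I_r)"
    using J_r(1) a_pos P_pos k by (intro mult_mono) auto
  also have "\<dots> = 3 / (2 * sqrt \<sigma>) * P * I_r"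
    using a k r \<sigma> by (simp add: field_simps)
  finally have "I_a * J_r \<le> 3 / (2 * sqrt \<sigma>) * P * I_r" .
  moreover have "0 \<le> \<sigma> * P * I_r" "0 \<le> I_a * J_r"
    using \<sigma> P_pos I_r I_a J_r by simp_all
  ultimately have "\<bar>\<sigma> * P * I_r - I_a * J_r\<bar> \<le> \<sigma> * P * I_r + 3 / (2 * sqrt \<sigma>) * P * I_r"
    unfolding abs_le_iff by linarith
  also have "\<dots> = rho_const \<sigma> * I_r * (\<sigma> * P)"
    using \<sigma> by (simp add: rho_const_def field_simps)
  finally have "\<bar>(\<sigma> * P * I_r - I_a * J_r) / (\<sigma> * P * K_r - I_a * K_r')\<bar> \<le> rho_const \<sigma> * I_r * (\<sigma> * P) / (\<sigma> * P * K_r)"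
    using \<sigma> P_pos K_r I_a K_r' by (intro abs_divide_le_divide) (auto simp: mult_nonneg_nonpos)
  then show ?thesis
    using \<sigma> P_pos by simp
qed

lemma rho0_bound_real:
  fixes \<sigma> r a P I_a I_r J_r K_r K_r' L :: real
  assumes \<sigma>: "0 < \<sigma>" and r: "0 < r" and a: "a = r / sqrt \<sigma>"
    and I_a: "0 < I_a" and I_r: "0 < I_r" and P: "0 \<le> P" "P \<le> a / 2 * I_a"
    and J_r: "0 \<le> J_r" "J_r \<le> r / 2 * I_r" and K_r: "0 \<le> K_r" and L: "0 < L" "L \<le> - K_r'"
  shows "\<bar>(\<sigma> * P * I_r - I_a * J_r) / (\<sigma> * P * K_r - I_a * K_r')\<bar> \<le> (sqrt \<sigma> + 1) / 2 * r * I_r / L"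
proof -
  have "\<sigma> * a = (sqrt \<sigma> * sqrt \<sigma>) * (r / sqrt \<sigma>)"
    using a \<sigma> by simp
  also have "\<dots> = r * sqrt \<sigma>"
    using \<sigma> by (simp add: field_simps)
  finally have \<sigma>a: "\<sigma> * a = r * sqrt \<sigma>" .
  have "0 \<le> \<sigma> * P * I_r" "0 \<le> I_a * J_r"
    using \<sigma> P I_r I_a J_r by simp_all
  then have "\<bar>\<sigma> * P * I_r - I_a * J_r\<bar> \<le> \<sigma> * P * I_r + I_a * J_r"
    unfolding abs_le_iff by linarith
  also have "\<dots> \<le> \<sigma> * (a / 2 * I_a) * I_r + I_a * (r / 2 * I_r)"
    using P J_r \<sigma> I_r I_a by (intro add_mono mult_right_mono mult_left_mono) auto
  also have "\<dots> = (sqrt \<sigma> + 1) / 2 * r * I_r * I_a"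
    using \<sigma>a by (simp add: algebra_simps)
  finally have "\<bar>(\<sigma> * P * I_r - I_a * J_r) / (\<sigma> * P * K_r - I_a * K_r')\<bar> \<le> (sqrt \<sigma> + 1) / 2 * r * I_r * I_a / (L * I_a)"
  proof (rule abs_divide_le_divide)
    have "I_a * L \<le> I_a * (- K_r')"
      using I_a by (intro mult_left_mono L(2)) simp
    moreover have "0 \<le> \<sigma> * P * K_r"
      using \<sigma> P K_r by simp
    ultimately show "L * I_a \<le> \<sigma> * P * K_r - I_a * K_r'"
      by (simp add: mult.commute)
  qed (use I_a L in \<open>simp_all add: mult.commute\<close>)
  then show ?thesis
    using I_a by simp
qed

lemma rho_bound:
  assumes k: "1 \<le> k" and \<sigma>: "0 < \<sigma>" and r: "0 < r" "r \<le> 1"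
  shows "\<bar>rho \<sigma> r (int k)\<bar> \<le> rho_const \<sigma> * r ^ k * bessel_I (int k) 1 / bessel_K (int k) 1"
proof -
  define a where "a = r / sqrt \<sigma>"
  have a: "0 < a"
    unfolding a_def using r \<sigma> by simp
  have "\<bar>rho \<sigma> r (int k)\<bar> \<le> rho_const \<sigma> * bessel_I (int k) r / bessel_K (int k) r"
    unfolding rho_def a_def[symmetric]
    by (rule rho_bound_real[OF \<sigma> r(1) r(2) a_def, of "real k"])
       (use k a r bessel_I'_lower[OF a, of k] bessel_I'_upper[OF r(1), of k] bessel_I'_pos[OF r(1), of k]
          bessel_K'_neg[OF r(1), of "int k"] in \<open>auto simp: bessel_I_pos bessel_K_pos less_imp_le\<close>)
  also have "\<dots> \<le> rho_const \<sigma> * (r ^ k * bessel_I (int k) 1 / bessel_K (int k) 1)"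
  proof -
    have "bessel_I (int k) r / bessel_K (int k) r \<le> r ^ k * bessel_I (int k) 1 / bessel_K (int k) 1"
      using bessel_I_le_pow[OF r, of k] bessel_I_pos[OF r(1), of k] bessel_K_pos[of 1 "int k"]
        bessel_K_antimono[OF r, of "int k"]
      by (intro frac_le) auto
    then have "rho_const \<sigma> * (bessel_I (int k) r / bessel_K (int k) r)
        \<le> rho_const \<sigma> * (r ^ k * bessel_I (int k) 1 / bessel_K (int k) 1)"
      using rho_const_pos[OF \<sigma>] by (intro mult_left_mono) auto
    then show ?thesis
      by (simp only: times_divide_eq_right)
  qed
  finally show ?thesis
    by simp
qed

text \<open>For k = 0 the factor r cannot come from r^k; it comes from I_0'(x) <= x/2 I_0(x) instead.\<close>

lemma rho0_bound:
  assumes \<sigma>: "0 < \<sigma>" and r: "0 < r" "r \<le> 1"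
  shows "\<bar>rho \<sigma> r 0\<bar> \<le> (sqrt \<sigma> + 1) / 2 * r * bessel_I 0 1 / (- bessel_K' 0 1)"
proof -
  define a where "a = r / sqrt \<sigma>"
  have a: "0 < a"
    unfolding a_def using r \<sigma> by simp
  have K'1: "0 < - bessel_K' 0 1"
    using bessel_K'_neg[of 1 0] by simp
  have "\<bar>rho \<sigma> r 0\<bar> \<le> (sqrt \<sigma> + 1) / 2 * r * bessel_I 0 r / (- bessel_K' 0 1)"
    unfolding rho_def a_def[symmetric]
    by (rule rho0_bound_real[OF \<sigma> r(1) a_def _ _ _ _ _ _ _ K'1])
       (use a r bessel_I'_pos[OF a, of 0] bessel_I'_pos[OF r(1), of 0] bessel_I_pos[OF a, of 0]
          bessel_I_pos[OF r(1), of 0] bessel_K_pos[OF r(1), of 0] bessel_I'_upper[OF a, of 0]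
          bessel_I'_upper[OF r(1), of 0] minus_bessel_K'_antimono[OF r, of 0] in auto)
  also have "\<dots> \<le> (sqrt \<sigma> + 1) / 2 * r * bessel_I 0 1 / (- bessel_K' 0 1)"
    using bessel_I_le_pow[OF r, of 0] K'1 r \<sigma> by (intro divide_right_mono mult_left_mono) auto
  finally show ?thesis .
qed

lemma rho_tendsto_sigma:
  assumes r: "0 < r"
  shows "((\<lambda>\<sigma>. rho \<sigma> r (int k)) \<longlongrightarrow> 0) (at 1 within {0<..})"
proof -
  let ?F = "at (1::real) within {0<..}"
  have "((\<lambda>\<sigma>. r / sqrt \<sigma>) \<longlongrightarrow> r / sqrt 1) ?F"
    by (intro tendsto_intros) auto
  then have a: "((\<lambda>\<sigma>. r / sqrt \<sigma>) \<longlongrightarrow> r) ?F"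
    by simp
  note I = isCont_tendsto_compose[OF isCont_bessel_I a] and I' = isCont_tendsto_compose[OF isCont_bessel_I' a]
  have "((\<lambda>\<sigma>. rho \<sigma> r (int k)) \<longlongrightarrow>
      (1 * bessel_I' (int k) r * bessel_I (int k) r - bessel_I (int k) r * bessel_I' (int k) r) /
      (1 * bessel_I' (int k) r * bessel_K (int k) r - bessel_I (int k) r * bessel_K' (int k) r)) ?F"
    unfolding rho_def
  proof (intro tendsto_intros I I')
    have "0 < bessel_I' (int k) r * bessel_K (int k) r"
      using bessel_I'_pos[OF r] bessel_K_pos[OF r] by simp
    moreover have "bessel_I (int k) r * bessel_K' (int k) r < 0"
      using bessel_I_pos[OF r] bessel_K'_neg[OF r] by (rule mult_pos_neg)
    ultimately show "1 * bessel_I' (int k) r * bessel_K (int k) r - bessel_I (int k) r * bessel_K' (int k) r \<noteq> 0"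
      by simp
  qed
  then show ?thesis
    by simp
qed

lemma rho_tendsto_radius:
  assumes \<sigma>: "0 < \<sigma>"
  shows "((\<lambda>r. rho \<sigma> r (int k)) \<longlongrightarrow> 0) (at 0 within {0<..<1})"
proof -
  obtain c where c: "\<And>r. 0 < r \<Longrightarrow> r \<le> 1 \<Longrightarrow> \<bar>rho \<sigma> r (int k)\<bar> \<le> c * r"
  proof (cases "k = 0")
    case True
    then show thesis
      using rho0_bound[OF \<sigma>] that[of "(sqrt \<sigma> + 1) / 2 * bessel_I 0 1 / (- bessel_K' 0 1)"]
      by (simp add: mult_ac)
  next
    case False
    have "\<bar>rho \<sigma> r (int k)\<bar> \<le> rho_const \<sigma> * bessel_I (int k) 1 / bessel_K (int k) 1 * r"
      if r: "0 < r" "r \<le> 1" for r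
    proof -
      have "\<bar>rho \<sigma> r (int k)\<bar> \<le> rho_const \<sigma> * bessel_I (int k) 1 / bessel_K (int k) 1 * r ^ k"
        using rho_bound[of k \<sigma> r] False \<sigma> r by (simp add: mult_ac)
      also have "\<dots> \<le> rho_const \<sigma> * bessel_I (int k) 1 / bessel_K (int k) 1 * r"
        using power_decreasing[of 1 k r] False r rho_const_pos[OF \<sigma>] bessel_I_pos[of 1 k] bessel_K_pos[of 1 "int k"]
        by (intro mult_left_mono) auto
      finally show ?thesis .
    qed
    then show thesis
      by (rule that)
  qed
  have "\<forall>\<^sub>F r in at 0 within {0<..<1}. norm (rho \<sigma> r (int k)) \<le> c * r"
    unfolding eventually_at_filter by (intro always_eventually) (auto intro: c)
  moreover have "((\<lambda>r. c * r) \<longlongrightarrow> c * 0) (at 0 within {0<..<1})"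
    by (intro tendsto_intros)
  ultimately show ?thesis
    by (auto intro: Lim_null_comparison)
qed

definition NtD_gap :: "int \<Rightarrow> real \<Rightarrow> real" where
  "NtD_gap n \<rho> = (\<rho> * bessel_K n 1 - bessel_I n 1) / (\<rho> * bessel_K' n 1 - bessel_I' n 1)
     - bessel_I n 1 / bessel_I' n 1"

lemma NtD_core_minus_NtD_hom:
  "(\<lambda>g. NtD_core \<sigma> r g - NtD_hom g) = (\<lambda>g n. complex_of_real (NtD_gap n (rho \<sigma> r n)) * g n)"
  unfolding NtD_core_def NtD_hom_def NtD_gap_def by (intro ext) (simp add: left_diff_distrib)

lemma NtD_gap_minus: "NtD_gap (- n) = NtD_gap n"
  unfolding NtD_gap_def[abs_def] bessel_I_minus bessel_I'_minus bessel_K_minus bessel_K'_minus ..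

lemma NtD_gap_tendsto_0:
  assumes "(f \<longlongrightarrow> 0) F"
  shows "((\<lambda>p. NtD_gap (int k) (f p)) \<longlongrightarrow> 0) F"
proof -
  have "bessel_I' (int k) 1 \<noteq> 0"
    using bessel_I'_pos[of 1 k] by simp
  then have "((\<lambda>p. NtD_gap (int k) (f p)) \<longlongrightarrow> NtD_gap (int k) 0) F"
    unfolding NtD_gap_def by (intro tendsto_intros assms) simp
  then show ?thesis
    by (simp add: NtD_gap_def)
qed

lemma NtD_gap_bound_real:
  fixes \<rho> I I' K K' :: real
  assumes I': "0 < I'" and I: "0 \<le> I" and K: "0 \<le> K" and K': "K' \<le> 0"
    and small: "\<bar>\<rho>\<bar> * (- K') \<le> I' / 2"
  shows "\<bar>(\<rho> * K - I) / (\<rho> * K' - I') - I / I'\<bar> \<le> 2 * \<bar>\<rho>\<bar> * (K * I' - K' * I) / I'\<^sup>2"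
proof -
  define d where "d = I' - \<rho> * K'"
  have "\<rho> * K' \<le> \<bar>\<rho>\<bar> * (- K')"
    using mult_right_mono[of "- \<rho>" "\<bar>\<rho>\<bar>" "- K'"] K' by simp
  then have d: "I' / 2 \<le> d"
    using small unfolding d_def by linarith
  then have "(\<rho> * K - I) / (\<rho> * K' - I') - I / I' = \<rho> * (K' * I - K * I') / (d * I')"
    using I' unfolding d_def by (simp add: field_simps)
  moreover have num: "K' * I - K * I' \<le> 0"
    using mult_nonneg_nonneg[OF K less_imp_le[OF I']] mult_nonpos_nonneg[OF K' I] by linarith
  ultimately have "\<bar>(\<rho> * K - I) / (\<rho> * K' - I') - I / I'\<bar> = \<bar>\<rho>\<bar> * (K * I' - K' * I) / (d * I')"
    using d I' by (simp add: abs_divide abs_mult abs_of_nonpos)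
  also have "\<dots> \<le> \<bar>\<rho>\<bar> * (K * I' - K' * I) / (I' / 2 * I')"
    using d I' num by (intro divide_left_mono mult_right_mono mult_nonneg_nonneg) auto
  also have "\<dots> = 2 * \<bar>\<rho>\<bar> * (K * I' - K' * I) / I'\<^sup>2"
    by (simp add: power2_eq_square)
  finally show ?thesis .
qed

lemma NtD_gap_tail_bound_real:
  fixes k \<rho> \<delta> I I' K K' :: real
  assumes k: "1 \<le> k" and I: "0 < I" and I': "k * I \<le> I'" and K: "0 < K" and K': "K' \<le> 0" "- K' \<le> (k + 1) * K"
    and \<rho>: "(k + 1) * \<bar>\<rho>\<bar> * K \<le> \<delta> * I" and \<delta>: "\<delta> \<le> 1/2"
  shows "\<bar>(\<rho> * K - I) / (\<rho> * K' - I') - I / I'\<bar> \<le> 4 * \<delta> / k"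
proof -
  have "I \<le> k * I"
    using mult_right_mono[OF k, of I] I by simp
  then have I_le: "I \<le> I'" and I'_pos: "0 < I'"
    using I I' by linarith+
  have I_le_k: "I \<le> I' / k"
    using I' k by (simp add: le_divide_eq mult.commute)
  have "\<bar>\<rho>\<bar> * K \<le> (k + 1) * \<bar>\<rho>\<bar> * K"
    using mult_right_mono[of 1 "k + 1" "\<bar>\<rho>\<bar> * K"] k K by (simp add: mult.assoc)
  then have \<rho>K: "\<bar>\<rho>\<bar> * K \<le> \<delta> * I"
    using \<rho> by linarith
  moreover have "0 \<le> \<bar>\<rho>\<bar> * K"
    using K by simp
  ultimately have "0 \<le> \<delta> * I"
    by linarith
  then have \<delta>_nonneg: "0 \<le> \<delta>"
    using I by (simp add: zero_le_mult_iff)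
  have \<rho>K': "\<bar>\<rho>\<bar> * (- K') \<le> \<delta> * I"
    using mult_left_mono[OF K'(2) abs_ge_zero[of \<rho>]] \<rho> by (simp add: mult_ac)
  have "\<delta> * I \<le> 1/2 * I"
    using mult_right_mono[OF \<delta>, of I] I by simp
  then have "\<bar>\<rho>\<bar> * (- K') \<le> I' / 2"
    using \<rho>K' I_le by linarith
  then have "\<bar>(\<rho> * K - I) / (\<rho> * K' - I') - I / I'\<bar> \<le> 2 * \<bar>\<rho>\<bar> * (K * I' - K' * I) / I'\<^sup>2"
    using I'_pos I K K' by (intro NtD_gap_bound_real) auto
  also have "\<dots> \<le> 2 * (\<delta> * I * (I' + I)) / I'\<^sup>2"
  proof -
    have "\<bar>\<rho>\<bar> * K * I' \<le> \<delta> * I * I'" "\<bar>\<rho>\<bar> * (- K') * I \<le> \<delta> * I * I"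
      using mult_right_mono[OF \<rho>K, of I'] mult_right_mono[OF \<rho>K', of I] I I'_pos by simp_all
    then have "\<bar>\<rho>\<bar> * (K * I' - K' * I) \<le> \<delta> * I * (I' + I)"
      by (simp add: algebra_simps)
    then show ?thesis
      by (intro divide_right_mono) auto
  qed
  also have "\<dots> \<le> 2 * (\<delta> * (I' / k) * (2 * I')) / I'\<^sup>2"
    using I_le I_le_k I \<delta>_nonneg I'_pos k by (intro divide_right_mono mult_left_mono mult_mono) auto
  also have "\<dots> = 4 * \<delta> / k"
    using I'_pos k by (simp add: power2_eq_square field_simps)
  finally show ?thesis .
qed

lemma sqrt_one_plus_square_le:
  fixes k :: real
  assumes "1 \<le> k"
  shows "sqrt (1 + k\<^sup>2) \<le> 2 * k"
proof -
  have "sqrt (1 + k\<^sup>2) \<le> sqrt ((2 * k)\<^sup>2)"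
    using mult_mono[OF assms assms] assms by (intro real_sqrt_le_mono) (simp add: power2_eq_square)
  also have "\<dots> = 2 * k"
    using assms by (simp only: real_sqrt_abs)
  finally show ?thesis .
qed

lemma NtD_gap_rho_bound:
  assumes k: "1 \<le> k" and \<sigma>: "0 < \<sigma>" and r: "0 < r" "r \<le> 1"
    and small: "rho_const \<sigma> * (real k + 1) * r ^ k \<le> \<delta>" and \<delta>: "\<delta> \<le> 1/2"
  shows "sqrt (1 + (real k)\<^sup>2) * \<bar>NtD_gap (int k) (rho \<sigma> r (int k))\<bar> \<le> 8 * \<delta>"
proof -
  have I: "0 < bessel_I (int k) 1" and K: "0 < bessel_K (int k) 1"
    using bessel_I_pos[of 1 k] bessel_K_pos[of 1 "int k"] by simp_all
  have "(real k + 1) * \<bar>rho \<sigma> r (int k)\<bar> * bessel_K (int k) 1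
      \<le> (real k + 1) * (rho_const \<sigma> * r ^ k * bessel_I (int k) 1 / bessel_K (int k) 1) * bessel_K (int k) 1"
    using rho_bound[OF k \<sigma> r] K by (intro mult_right_mono mult_left_mono) auto
  also have "\<dots> = (rho_const \<sigma> * (real k + 1) * r ^ k) * bessel_I (int k) 1"
    using K by (simp add: field_simps)
  also have "\<dots> \<le> \<delta> * bessel_I (int k) 1"
    using small I by (intro mult_right_mono) auto
  finally have \<rho>_small: "(real k + 1) * \<bar>rho \<sigma> r (int k)\<bar> * bessel_K (int k) 1 \<le> \<delta> * bessel_I (int k) 1" .
  have "\<bar>NtD_gap (int k) (rho \<sigma> r (int k))\<bar> \<le> 4 * \<delta> / k"
    unfolding NtD_gap_def
    by (rule NtD_gap_tail_bound_real[OF _ _ _ _ _ _ \<rho>_small \<delta>])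
       (use k I K bessel_I'_lower[of 1 k] bessel_K'_neg[of 1 "int k"] minus_bessel_K'_le[OF k, of 1] in auto)
  then have "sqrt (1 + (real k)\<^sup>2) * \<bar>NtD_gap (int k) (rho \<sigma> r (int k))\<bar> \<le> 2 * k * (4 * \<delta> / k)"
    using sqrt_one_plus_square_le[of k] k by (intro mult_mono) auto
  then show ?thesis
    using k by simp
qed

lemma NtD_opnorm_tendsto_0:
  fixes \<sigma> r :: "'a \<Rightarrow> real"
  assumes pos: "\<forall>\<^sub>F p in F. 0 < \<sigma> p \<and> 0 < r p \<and> r p \<le> 1"
    and pointwise: "\<And>k. ((\<lambda>p. rho (\<sigma> p) (r p) (int k)) \<longlongrightarrow> 0) F"
    and tail: "\<And>\<delta>. 0 < \<delta> \<Longrightarrow> \<exists>N. \<forall>\<^sub>F p in F. \<forall>k\<ge>N. rho_const (\<sigma> p) * (real k + 1) * r p ^ k \<le> \<delta>"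
  shows "((\<lambda>p. opnorm_Hm_H (\<lambda>g. NtD_core (\<sigma> p) (r p) g - NtD_hom g)) \<longlongrightarrow> 0) F"
  unfolding NtD_core_minus_NtD_hom
proof (rule opnorm_multiplier_tendsto_0)
  show "NtD_gap (- n) (rho (\<sigma> p) (r p) (- n)) = NtD_gap n (rho (\<sigma> p) (r p) n)" for p n
    by (simp add: NtD_gap_minus rho_minus)
  show "((\<lambda>p. NtD_gap (int k) (rho (\<sigma> p) (r p) (int k))) \<longlongrightarrow> 0) F" for k
    by (rule NtD_gap_tendsto_0[OF pointwise])
  fix \<epsilon> :: real
  assume "0 < \<epsilon>"
  then obtain N where N: "\<forall>\<^sub>F p in F. \<forall>k\<ge>N. rho_const (\<sigma> p) * (real k + 1) * r p ^ k \<le> min (1/2) (\<epsilon>/8)"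
    using tail[of "min (1/2) (\<epsilon>/8)"] by auto
  have "\<forall>\<^sub>F p in F. \<forall>k\<ge>max N 1. sqrt (1 + (real k)\<^sup>2) * \<bar>NtD_gap (int k) (rho (\<sigma> p) (r p) (int k))\<bar> \<le> \<epsilon>"
    using pos N
  proof eventually_elim
    case (elim p)
    then show ?case
      using NtD_gap_rho_bound[of _ "\<sigma> p" "r p" "min (1/2) (\<epsilon>/8)"] by fastforce
  qed
  then show "\<exists>N. \<forall>\<^sub>F p in F. \<forall>k\<ge>N. sqrt (1 + (real k)\<^sup>2) * \<bar>NtD_gap (int k) (rho (\<sigma> p) (r p) (int k))\<bar> \<le> \<epsilon>"
    by blast
qed

lemma NtD_opnorm_tendsto_sigma:
  assumes r: "0 < r" "r < 1"
  shows "((\<lambda>\<sigma>. opnorm_Hm_H (\<lambda>g. NtD_core \<sigma> r g - NtD_hom g)) \<longlongrightarrow> 0) (at 1 within {0<..})"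
proof (rule NtD_opnorm_tendsto_0)
  show "\<forall>\<^sub>F \<sigma> in at 1 within {0<..}. 0 < (\<sigma> :: real) \<and> 0 < r \<and> r \<le> 1"
    using r by (auto simp: eventually_at_filter)
  show "((\<lambda>\<sigma>. rho \<sigma> r (int k)) \<longlongrightarrow> 0) (at 1 within {0<..})" for k
    by (rule rho_tendsto_sigma[OF r(1)])
  fix \<delta> :: real
  assume \<delta>: "0 < \<delta>"
  have "(\<lambda>k. 7 * (real k * r ^ k + r ^ k)) \<longlonglongrightarrow> 7 * (0 + 0)"
    using r by (intro tendsto_intros powser_times_n_limit_0 LIMSEQ_power_zero) auto
  then have "\<forall>\<^sub>F k in sequentially. 7 * ((real k + 1) * r ^ k) < \<delta>"
    using \<delta> by (intro order_tendstoD(2)) (auto simp: distrib_right)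
  then obtain N where N: "\<And>k. N \<le> k \<Longrightarrow> 7 * ((real k + 1) * r ^ k) < \<delta>"
    unfolding eventually_sequentially by blast
  have "\<forall>\<^sub>F \<sigma> in at 1 within {0<..}. 1/2 \<le> (\<sigma> :: real)"
    unfolding eventually_at by (intro exI[of _ "1/2"]) (auto simp: dist_real_def split: abs_split)
  then have "\<forall>\<^sub>F \<sigma> in at 1 within {0<..}. \<forall>k\<ge>N. rho_const \<sigma> * (real k + 1) * r ^ k \<le> \<delta>"
  proof eventually_elim
    case (elim \<sigma>)
    show ?case
    proof (intro allI impI)
      fix k
      assume "N \<le> k"
      have "rho_const \<sigma> * ((real k + 1) * r ^ k) \<le> 7 * ((real k + 1) * r ^ k)"
        using rho_const_le_7[OF elim] r by (intro mult_right_mono) auto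
      then show "rho_const \<sigma> * (real k + 1) * r ^ k \<le> \<delta>"
        using N[OF \<open>N \<le> k\<close>] unfolding mult.assoc by linarith
    qed
  qed
  then show "\<exists>N. \<forall>\<^sub>F \<sigma> in at 1 within {0<..}. \<forall>k\<ge>N. rho_const \<sigma> * (real k + 1) * r ^ k \<le> \<delta>"
    by blast
qed

lemma Suc_times_pow_le:
  fixes r :: real
  assumes "1 \<le> k" "0 \<le> r" "2 * r \<le> 1"
  shows "(real k + 1) * r ^ k \<le> 2 * r"
proof -
  have "real k + 1 \<le> 2 ^ k"
    using less_exp[of k] by (metis Suc_leI of_nat_Suc of_nat_le_iff of_nat_numeral of_nat_power add.commute)
  then have "(real k + 1) * r ^ k \<le> 2 ^ k * r ^ k"
    using assms by (intro mult_right_mono) auto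
  also have "\<dots> = (2 * r) ^ k"
    by (simp add: power_mult_distrib)
  also have "\<dots> \<le> (2 * r) ^ 1"
    using assms by (intro power_decreasing) auto
  finally show ?thesis
    by simp
qed

lemma NtD_opnorm_tendsto_radius:
  assumes \<sigma>: "0 < \<sigma>"
  shows "((\<lambda>r. opnorm_Hm_H (\<lambda>g. NtD_core \<sigma> r g - NtD_hom g)) \<longlongrightarrow> 0) (at 0 within {0<..<1})"
proof (rule NtD_opnorm_tendsto_0)
  show "\<forall>\<^sub>F r in at 0 within {0<..<1}. 0 < \<sigma> \<and> 0 < r \<and> r \<le> (1 :: real)"
    unfolding eventually_at_filter using \<sigma> by (intro always_eventually) auto
  show "((\<lambda>r. rho \<sigma> r (int k)) \<longlongrightarrow> 0) (at 0 within {0<..<1})" for k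
    by (rule rho_tendsto_radius[OF \<sigma>])
  fix \<delta> :: real
  assume \<delta>: "0 < \<delta>"
  define \<eta> where "\<eta> = min (1/2) (\<delta> / (2 * rho_const \<sigma>))"
  have \<eta>: "0 < \<eta>"
    unfolding \<eta>_def using \<delta> rho_const_pos[OF \<sigma>] by simp
  have "\<forall>\<^sub>F r in at 0 within {0<..<1}. 0 < r \<and> r < \<eta>"
    unfolding eventually_at using \<eta> by (intro exI[of _ \<eta>]) (auto simp: dist_real_def)
  then have "\<forall>\<^sub>F r in at 0 within {0<..<1}. \<forall>k\<ge>1. rho_const \<sigma> * (real k + 1) * r ^ k \<le> \<delta>"
  proof eventually_elim
    case (elim r)
    show ?case
    proof (intro allI impI)
      fix k :: nat
      assume "1 \<le> k"
      have "rho_const \<sigma> * ((real k + 1) * r ^ k) \<le> rho_const \<sigma> * (2 * r)"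
        using Suc_times_pow_le[OF \<open>1 \<le> k\<close>, of r] elim rho_const_pos[OF \<sigma>]
        by (intro mult_left_mono) (auto simp: \<eta>_def)
      also have "\<dots> \<le> \<delta>"
        using elim rho_const_pos[OF \<sigma>] by (simp add: \<eta>_def field_simps)
      finally show "rho_const \<sigma> * (real k + 1) * r ^ k \<le> \<delta>"
        by (simp add: mult.assoc)
    qed
  qed
  then show "\<exists>N. \<forall>\<^sub>F r in at 0 within {0<..<1}. \<forall>k\<ge>N. rho_const \<sigma> * (real k + 1) * r ^ k \<le> \<delta>"
    by blast
qed

theorem theorem2p1:
  shows "(\<forall>r1. 0 < r1 \<and> r1 < 1 \<longrightarrow>
           ((\<lambda>\<sigma>1. opnorm_Hm_H (\<lambda>g. NtD_core \<sigma>1 r1 g - NtD_hom g)) \<longlongrightarrow> 0) (at 1 within {0<..}))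
       \<and> (\<forall>\<sigma>1. 0 < \<sigma>1 \<longrightarrow>
           ((\<lambda>r1. opnorm_Hm_H (\<lambda>g. NtD_core \<sigma>1 r1 g - NtD_hom g)) \<longlongrightarrow> 0) (at 0 within {0<..<1}))"
  using NtD_opnorm_tendsto_sigma NtD_opnorm_tendsto_radius by blast

end
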